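(* Let $X$ be a real Banach space, $Y$ a closed subspace of $X$, $(\Omega,\Sigma,\mu)$ a complete probability space, $1\leq p<\infty$ and $n$ a positive integer. Let $f_1,\ldots,f_n\in L_p(\mu,X)$ and $g\in L_p(\mu,Y)$. If for almost all $s\in\Omega$, $g(s)$ is a relative $p$-center of $\{f_1(s),\ldots,f_n(s)\}$ in $Y$, then $g$ is a relative $p$-center of $\{f_1,\ldots,f_n\}\subset L_p(\mu,X)$ in $L_p(\mu,Y)$, i.e. $\sum_{i=1}^n\|f_i-g\|_p^p\leq\sum_{i=1}^n\|f_i-h\|_p^p$ for all $h\in L_p(\mu,Y)$.
   Context: $L_p(\mu,X)$ denotes the Banach space of Bochner $p$-integrable functions $\Omega\to X$ with norm $\|f\|_p=(\int_\Omega\|f(s)\|^p\,d\mu(s))^{1/p}$, and $L_p(\mu,Y)$ the subspace of those with values in $Y$. For a subset $Y$ of a normed space $X$, a finite set $\{a_1,\ldots,a_n\}\subset X$ and $m\in[1,\infty)$, a point $y_0\in Y$ is a relative $m$-center of $\{a_1,\ldots,a_n\}$ in $Y$ if $\sum_{i=1}^n\|a_i-y_0\|^m\leq\sum_{i=1}^n\|a_i-y\|^m$ for all $y\in Y$. *)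

theory Defs
  imports "HOL-Probability.Probability"
begin

definition strongly_measurable :: "'s measure \<Rightarrow> ('s \<Rightarrow> 'a::real_normed_vector) \<Rightarrow> bool" where
  "strongly_measurable M f \<longleftrightarrow> f \<in> borel_measurable M \<and>
     (\<exists>u::nat \<Rightarrow> 's \<Rightarrow> 'a. (\<forall>i. simple_function M (u i)) \<and>
        (\<forall>x\<in>space M. (\<lambda>i. u i x) \<longlonglongrightarrow> f x))"

text \<open>Bochner p-integrable functions with values in a subset Y (L_p(mu,Y));
  L_p(mu,X) is the case Y = UNIV.\<close>
definition Lp :: "'s measure \<Rightarrow> real \<Rightarrow> 'a::real_normed_vector set \<Rightarrow> ('s \<Rightarrow> 'a) set" where
  "Lp M p Y = {f. strongly_measurable M f \<and> (\<forall>s\<in>space M. f s \<in> Y) \<and>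
                  integrable M (\<lambda>s. norm (f s) powr p)}"

definition Lp_norm :: "'s measure \<Rightarrow> real \<Rightarrow> ('s \<Rightarrow> 'a::real_normed_vector) \<Rightarrow> real" where
  "Lp_norm M p f = (\<integral>s. norm (f s) powr p \<partial>M) powr (1 / p)"

definition relative_center ::
    "('a::minus \<Rightarrow> real) \<Rightarrow> real \<Rightarrow> 'a set \<Rightarrow> nat \<Rightarrow> (nat \<Rightarrow> 'a) \<Rightarrow> 'a \<Rightarrow> bool" where
  "relative_center nrm m Y n a y0 \<longleftrightarrow> y0 \<in> Y \<and>
     (\<forall>y\<in>Y. (\<Sum>i\<in>{1..n}. nrm (a i - y0) powr m) \<le> (\<Sum>i\<in>{1..n}. nrm (a i - y) powr m))"

end

theory Submission
  imports Defs
begin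

text \<open>Since \<open>\<parallel>u\<parallel>\<^sub>p\<^sup>p = \<integral> \<parallel>u\<parallel>\<^sup>p\<close>, the sum \<open>\<Sum>\<^sub>i \<parallel>f\<^sub>i - h\<parallel>\<^sub>p\<^sup>p\<close> is the integral of the pointwise sum
  \<open>\<Sum>\<^sub>i \<parallel>f\<^sub>i(s) - h(s)\<parallel>\<^sup>p\<close>, and for \<open>h\<close> with values in \<open>Y\<close> the a.e. pointwise minimality of \<open>g\<close>
  integrates to the claimed inequality.\<close>

lemma powr_add_le_two_powr:
  fixes a b p :: real
  assumes "0 \<le> a" "0 \<le> b" "0 \<le> p"
  shows "(a + b) powr p \<le> 2 powr p * (a powr p + b powr p)"
proof -
  have "(a + b) powr p \<le> (2 * max a b) powr p"
    using assms by (intro powr_mono2) auto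
  also have "\<dots> = 2 powr p * max a b powr p"
    using assms by (simp add: powr_mult)
  also have "\<dots> \<le> 2 powr p * (a powr p + b powr p)"
    by (intro mult_left_mono) (auto simp: max_def)
  finally show ?thesis .
qed

lemma strongly_measurable_diff:
  fixes f h :: "'s \<Rightarrow> 'a::real_normed_vector"
  assumes "strongly_measurable M f" "strongly_measurable M h"
  shows "strongly_measurable M (\<lambda>s. f s - h s)"
proof -
  obtain u where u: "\<And>i. simple_function M (u i)"
      "\<And>x. x \<in> space M \<Longrightarrow> (\<lambda>i. u i x) \<longlonglongrightarrow> f x"
    using assms(1) unfolding strongly_measurable_def by blast
  obtain v where v: "\<And>i. simple_function M (v i)"
      "\<And>x. x \<in> space M \<Longrightarrow> (\<lambda>i. v i x) \<longlonglongrightarrow> h x"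
    using assms(2) unfolding strongly_measurable_def by blast
  have simple: "\<And>i. simple_function M (\<lambda>s. u i s - v i s)"
    using u(1) v(1) by auto
  have lim: "\<And>x. x \<in> space M \<Longrightarrow> (\<lambda>i. u i x - v i x) \<longlonglongrightarrow> f x - h x"
    using u(2) v(2) by (intro tendsto_diff)
  have "(\<lambda>s. f s - h s) \<in> borel_measurable M"
    by (rule borel_measurable_LIMSEQ_metric[OF borel_measurable_simple_function[OF simple] lim])
  with simple lim show ?thesis
    unfolding strongly_measurable_def by (intro conjI exI[of _ "\<lambda>i s. u i s - v i s"]) auto
qed

lemma integrable_norm_diff_powr_Lp:
  fixes f h :: "'s \<Rightarrow> 'a::real_normed_vector"
  assumes "f \<in> Lp M p A" "h \<in> Lp M p B" "0 \<le> p"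
  shows "integrable M (\<lambda>s. norm (f s - h s) powr p)"
proof (rule Bochner_Integration.integrable_bound)
  have "strongly_measurable M (\<lambda>s. f s - h s)"
    using assms(1,2) by (intro strongly_measurable_diff) (auto simp: Lp_def)
  then have "(\<lambda>s. norm (f s - h s)) \<in> borel_measurable M"
    unfolding strongly_measurable_def using borel_measurable_norm measurable_compose by blast
  then show "(\<lambda>s. norm (f s - h s) powr p) \<in> borel_measurable M"
    by measurable
  show "integrable M (\<lambda>s. 2 powr p * (norm (f s) powr p + norm (h s) powr p))"
    using assms(1,2) by (auto simp: Lp_def)
  show "AE s in M. norm (norm (f s - h s) powr p)
      \<le> norm (2 powr p * (norm (f s) powr p + norm (h s) powr p))"
  proof (intro AE_I2)
    fix s
    have "norm (f s - h s) powr p \<le> (norm (f s) + norm (h s)) powr p"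
      using assms(3) by (intro powr_mono2) (auto intro: norm_triangle_ineq4)
    also have "\<dots> \<le> 2 powr p * (norm (f s) powr p + norm (h s) powr p)"
      using assms(3) by (intro powr_add_le_two_powr) auto
    finally show "norm (norm (f s - h s) powr p)
        \<le> norm (2 powr p * (norm (f s) powr p + norm (h s) powr p))"
      by simp
  qed
qed

lemma Lp_norm_powr:
  assumes "p \<noteq> 0"
  shows "Lp_norm M p u powr p = (\<integral>s. norm (u s) powr p \<partial>M)"
proof -
  have "0 \<le> (\<integral>s. norm (u s) powr p \<partial>M)"
    by (intro integral_nonneg_AE) auto
  with assms show ?thesis
    by (simp add: Lp_norm_def powr_powr)
qed

lemma sum_Lp_norm_diff_powr:
  assumes "p \<noteq> 0" "finite I" "\<And>i. i \<in> I \<Longrightarrow> integrable M (\<lambda>s. norm (f i s - h s) powr p)"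
  shows "(\<Sum>i\<in>I. Lp_norm M p (f i - h) powr p) = (\<integral>s. (\<Sum>i\<in>I. norm (f i s - h s) powr p) \<partial>M)"
proof -
  have "(\<Sum>i\<in>I. Lp_norm M p (f i - h) powr p) = (\<Sum>i\<in>I. \<integral>s. norm (f i s - h s) powr p \<partial>M)"
    using assms(1) by (simp add: Lp_norm_powr)
  also have "\<dots> = (\<integral>s. (\<Sum>i\<in>I. norm (f i s - h s) powr p) \<partial>M)"
    using assms(3) by (rule Bochner_Integration.integral_sum[symmetric])
  finally show ?thesis .
qed

theorem mainTheorem3:
  fixes M :: "'s measure" and Y :: "'a::banach set" and p :: real and n :: nat
    and f :: "nat \<Rightarrow> 's \<Rightarrow> 'a" and g :: "'s \<Rightarrow> 'a"
  assumes "subspace Y" and "closed Y"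
    and "prob_space M" and "complete_measure M"
    and "1 \<le> p"
    and "n \<ge> 1"
    and "\<forall>i\<in>{1..n}. f i \<in> Lp M p UNIV"
    and "g \<in> Lp M p Y"
    and "AE s in M. relative_center norm p Y n (\<lambda>i. f i s) (g s)"
  shows "relative_center (Lp_norm M p) p (Lp M p Y) n f g"
  unfolding relative_center_def
proof (intro conjI ballI)
  show "g \<in> Lp M p Y" by fact
  fix h assume h: "h \<in> Lp M p Y"
  have integrable: "\<And>i. i \<in> {1..n} \<Longrightarrow> integrable M (\<lambda>s. norm (f i s - u s) powr p)"
    if "u \<in> Lp M p Y" for u
    using assms(5,7) that by (intro integrable_norm_diff_powr_Lp) auto
  have pointwise: "AE s in M. (\<Sum>i\<in>{1..n}. norm (f i s - g s) powr p)
      \<le> (\<Sum>i\<in>{1..n}. norm (f i s - h s) powr p)"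
    using assms(9) AE_space by eventually_elim (use h in \<open>auto simp: relative_center_def Lp_def\<close>)
  have "(\<Sum>i\<in>{1..n}. Lp_norm M p (f i - g) powr p)
      = (\<integral>s. (\<Sum>i\<in>{1..n}. norm (f i s - g s) powr p) \<partial>M)"
    using assms(5) integrable[OF assms(8)] by (intro sum_Lp_norm_diff_powr) auto
  also have "\<dots> \<le> (\<integral>s. (\<Sum>i\<in>{1..n}. norm (f i s - h s) powr p) \<partial>M)"
    using pointwise integrable[OF assms(8)] integrable[OF h] by (intro integral_mono_AE) auto
  also have "\<dots> = (\<Sum>i\<in>{1..n}. Lp_norm M p (f i - h) powr p)"
    using assms(5) integrable[OF h] by (intro sum_Lp_norm_diff_powr[symmetric]) auto
  finally show "(\<Sum>i\<in>{1..n}. Lp_norm M p (f i - g) powr p)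
      \<le> (\<Sum>i\<in>{1..n}. Lp_norm M p (f i - h) powr p)" .
qed

end
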